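(* Let $(\tilde\Omega,\tilde{\mathcal F},(\tilde{\mathcal F}_t)_{t\ge0},\tilde{\mathbb P})$, $\tilde W$, $\tilde u$, $\tilde u_0$ be as provided by the existence theorem described in the context, and let $\alpha\in(-\tfrac13,0)$. Then $\tilde{\mathbb P}$-almost surely $\tilde u$ exhibits a zero contact angle in the following sense: for almost all $t_0\in(0,T]$, at every point $x_0\in\mathcal O$ with $\tilde u(x_0,t_0,\omega)=0$ the classical derivative $\frac{\partial}{\partial x}\tilde u(x_0,t_0,\omega)$ exists and equals $0$.
   Context: Setting: $L,T>0$, $\mathcal O=[0,L]$, $\mathcal O_T=(0,L)\times(0,T)$, periodic boundary conditions (subscript "per"). Basis $g_k(x)=\sqrt{2/L}\sin(2\pi kx/L)$ ($k>0$), $g_0=1/\sqrt L$, $g_k(x)=\sqrt{2/L}\cos(2\pi kx/L)$ ($k<0$); nonnegative numbers $\lambda_k$ with $\lambda_{-k}=\lambda_k$ and $\sum_k k^4\lambda_k^2<\infty$. $\Lambda^0$ is a probability measure on $H^1_{\mathrm{per}}(\mathcal O)$ supported on nonnegative functions with $\operatorname{ess\,sup}_{v\in\operatorname{supp}\Lambda^0}\{\int_{\mathcal O}\tfrac12|v_x|^2+\int_{\mathcal O}v\}\le C$. Existence theorem (under these hypotheses and mobility $m(u)=u^2$): there exist a stochastic basis $(\tilde\Omega,\tilde{\mathcal F},(\tilde{\mathcal F}_t),\tilde{\mathbb P})$, an adapted $Q$-Wiener process $\tilde W=\sum_k\lambda_kg_k\tilde\beta_k$, a process $\tilde u\in L^2(\tilde\Omega;L^2(0,T;W^{1,3}_{\mathrm{per}}(\mathcal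 O)))\cap L^2(\tilde\Omega;C^{\tilde\gamma,\tilde\sigma}(\overline{\mathcal O_T}))$ ($\tilde\gamma<1/2,\tilde\sigma<1/8$, Hölder in space/time) and $\tilde u_0\in L^2(\tilde\Omega;H^1_{\mathrm{per}}(\mathcal O))$ such that $\tilde u,\tilde u_0\ge0$ a.s.; $\Lambda^0=\tilde{\mathbb P}\circ\tilde u_0^{-1}$; for all $t\in[0,T]$, $\phi\in H^3_{\mathrm{per}}(\mathcal O)$, a.s. $\int_{\mathcal O}(\tilde u(t)-\tilde u_0)\phi=\int_0^t\int_{\{\tilde u>0\}}\tilde u_x^3\phi_x+3\int_0^t\int_{\mathcal O}\tilde u\tilde u_x^2\phi_{xx}+\int_0^t\int_{\mathcal O}\tilde u^2\tilde u_x\phi_{xxx}-\frac12\int_0^t\int_{\mathcal O}\sum_k\lambda_k^2g_k(g_k\tilde u)_x\phi_x-\sum_k\int_0^t\int_{\mathcal O}\lambda_kg_k\tilde u\phi_x\,dx\,d\tilde\beta_k$; and for every $q\ge1$, $\alpha\in(-1/3,0)$: $\tilde{\mathbb E}[\sup_t(\int_{\mathcal O}\frac12|\tilde u_x|^2)^q]+\tilde{\mathbb E}[(\int_0^T\int_{\mathcal O}((\tilde u)^{\frac{\alpha+3}{4}})_x^4)^q]+\tilde{\mathbb E}[(\int_0^T\int_{\mathcal O}((\tilde u)^{\frac{\alpha+3}{2}})_{xx}^2)^q]\le C(\tilde u_0,q,T)$. *)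

theory Defs
  imports "HOL-Probability.Probability"
begin

definition per_C2_test :: "real \<Rightarrow> (real \<Rightarrow> real) \<Rightarrow> (real \<Rightarrow> real) \<Rightarrow> (real \<Rightarrow> real) \<Rightarrow> bool" where
  "per_C2_test L \<phi> \<phi>' \<phi>'' \<longleftrightarrow>
     (\<forall>x. \<phi> (x + L) = \<phi> x) \<and>
     (\<forall>x. (\<phi> has_real_derivative \<phi>' x) (at x)) \<and>
     (\<forall>x. (\<phi>' has_real_derivative \<phi>'' x) (at x)) \<and>
     continuous_on UNIV \<phi>''"

definition weak_dxx_per :: "real \<Rightarrow> (real \<Rightarrow> real) \<Rightarrow> (real \<Rightarrow> real) \<Rightarrow> bool" where
  "weak_dxx_per L f g \<longleftrightarrow>
     set_integrable lborel {0..L} f \<and> set_integrable lborel {0..L} g \<and>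
     (\<forall>\<phi> \<phi>' \<phi>''. per_C2_test L \<phi> \<phi>' \<phi>'' \<longrightarrow>
        (LINT x:{0..L}|lborel. f x * \<phi>'' x) = (LINT x:{0..L}|lborel. g x * \<phi> x))"

definition per_ext :: "real \<Rightarrow> (real \<Rightarrow> real) \<Rightarrow> real \<Rightarrow> real" where
  "per_ext L f x = f (x - L * of_int \<lfloor>x / L\<rfloor>)"

end

(*
  Fix a sample path and a time t outside the exceptional null sets and put p = (alpha + 3)/2,
  so that 4/3 < p < 3/2.  Finiteness of the expected L2 norm makes the periodic weak second
  derivative g of v = u(.,t)^p square integrable.  By a periodic du Bois-Reymond argument,
  v is an affine function plus the second antiderivative of g, so Cauchy-Schwarz yields the
  estimate |v y - v x - m x (y - x)| <= K |y - x|^(3/2).  A nonnegative function with such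
  an expansion has slope 0 at each of its zeros (at the endpoints the two one-sided signs are
  matched by periodicity), hence u y <= C |y - x0|^(3/(2p)) near a zero x0, and 3/(2p) > 1
  forces the derivative of the periodic extension of u to vanish there.
*)
theory Submission
  imports Defs
begin

section \<open>Periodic extension\<close>

lemma floor_divide_eq:
  fixes L x :: real and k :: int
  assumes "L > 0" "of_int k * L \<le> x" "x < (of_int k + 1) * L"
  shows "\<lfloor>x / L\<rfloor> = k"
  by (rule floor_unique) (use assms in \<open>simp_all add: pos_le_divide_eq pos_divide_less_eq\<close>)

lemma per_ext_shift:
  assumes L: "L > 0" and h: "h 0 = h L" and y: "y \<in> {of_int j * L..(of_int j + 1) * L}"
  shows "per_ext L h y = h (y - of_int j * L)"
proof (cases "y < (of_int j + 1) * L")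
  case True
  then have "\<lfloor>y / L\<rfloor> = j" using floor_divide_eq[of L j y] L y by simp
  then show ?thesis by (simp add: per_ext_def mult.commute)
next
  case False
  then have y_eq: "y = (of_int j + 1) * L" using y by simp
  then have "\<lfloor>y / L\<rfloor> = j + 1" using L by simp
  then show ?thesis using y_eq h by (simp add: per_ext_def algebra_simps)
qed

lemma per_ext_eq:
  assumes "L > 0" "h 0 = h L" "x \<in> {0..L}"
  shows "per_ext L h x = h x"
  using per_ext_shift[of L h x 0] assms by simp

lemma per_ext_add_period:
  assumes "L > 0"
  shows "per_ext L h (x + L) = per_ext L h x"
proof -
  have "(x + L) / L = x / L + 1" using assms by (simp add: field_simps)
  then show ?thesis by (simp add: per_ext_def algebra_simps)
qed

lemma continuous_on_per_ext:
  assumes L: "L > 0" and h: "h 0 = h L" and cont: "continuous_on {0..L} h"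
  shows "continuous_on UNIV (per_ext L h)"
proof (rule continuous_at_imp_continuous_on, intro ballI)
  fix x :: real
  have cell: "continuous_on {of_int j * L..(of_int j + 1) * L} (per_ext L h)" for j :: int
  proof -
    have "continuous_on {of_int j * L..(of_int j + 1) * L} (\<lambda>y. h (y - of_int j * L))"
      by (rule continuous_on_compose2[OF cont]) (auto intro!: continuous_intros simp: algebra_simps)
    then show ?thesis
      by (rule continuous_on_cong[THEN iffD1, rotated 2]) (use per_ext_shift[OF L h] in auto)
  qed
  define k where "k = \<lfloor>x / L\<rfloor>"
  have "of_int k \<le> x / L" "x / L < of_int k + 1"
    unfolding k_def by linarith+
  then have x: "x \<in> {(of_int k - 1) * L<..<(of_int k + 1) * L}"
    using L by (auto simp: pos_le_divide_eq pos_divide_less_eq algebra_simps)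
  have "continuous_on ({of_int (k - 1) * L..(of_int (k - 1) + 1) * L} \<union> {of_int k * L..(of_int k + 1) * L})
      (per_ext L h)"
    by (rule continuous_on_closed_Un[OF _ _ cell cell]) auto
  then have "continuous_on {(of_int k - 1) * L<..<(of_int k + 1) * L} (per_ext L h)"
    by (rule continuous_on_subset) (auto simp: algebra_simps)
  with x show "isCont (per_ext L h) x"
    using continuous_on_eq_continuous_at[OF open_greaterThanLessThan] by blast
qed

text \<open>Near an endpoint, x0 is matched with the opposite endpoint z, where h takes the same value.\<close>

lemma per_ext_near:
  assumes L: "L > 0" and x0: "x0 \<in> {0..L}" and h: "h 0 = h L"
  obtains \<delta> where "\<delta> > 0" and "\<And>x. \<bar>x - x0\<bar> < \<delta> \<Longrightarrow>
    \<exists>y\<in>{0..L}. \<exists>z\<in>{0..L}. per_ext L h x = h y \<and> h z = h x0 \<and> \<bar>y - z\<bar> = \<bar>x - x0\<bar>"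
proof
  define \<delta> where "\<delta> = min (if 0 < x0 then x0 else L) (if x0 < L then L - x0 else L)"
  show "\<delta> > 0" using L x0 by (auto simp: \<delta>_def)
  fix x assume x: "\<bar>x - x0\<bar> < \<delta>"
  consider "x \<in> {0..L}" | "x < 0" "x0 = 0" | "x > L" "x0 = L"
    using x x0 by (fastforce simp: \<delta>_def split: if_splits)
  then show "\<exists>y\<in>{0..L}. \<exists>z\<in>{0..L}. per_ext L h x = h y \<and> h z = h x0 \<and> \<bar>y - z\<bar> = \<bar>x - x0\<bar>"
  proof cases
    case 1
    then show ?thesis using per_ext_eq[OF L h] x0 by blast
  next
    case 2
    have "x \<in> {of_int (-1) * L..(of_int (-1) + 1) * L}" using 2 x by (simp add: \<delta>_def)
    from per_ext_shift[OF L h this] have "per_ext L h x = h (x + L)" by simp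
    then show ?thesis using 2 x h by (intro bexI[of _ "x + L"] bexI[of _ L]) (auto simp: \<delta>_def)
  next
    case 3
    have "x \<in> {of_int 1 * L..(of_int 1 + 1) * L}" using 3 x L by (auto simp: \<delta>_def)
    from per_ext_shift[OF L h this] have "per_ext L h x = h (x - L)" by simp
    then show ?thesis using 3 x h by (intro bexI[of _ "x - L"] bexI[of _ 0]) (auto simp: \<delta>_def)
  qed
qed

section \<open>A periodic du Bois-Reymond lemma\<close>

lemma has_integral_antiderivative:
  fixes F q :: "real \<Rightarrow> real"
  assumes "\<And>x. (F has_real_derivative q x) (at x)" and "a \<le> b"
  shows "(q has_integral (F b - F a)) {a..b}"
  by (rule fundamental_theorem_of_calculus)
     (use assms in \<open>auto simp: has_real_derivative_iff_has_vector_derivative intro: has_vector_derivative_at_within\<close>)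

lemma periodic_antiderivative:
  fixes q :: "real \<Rightarrow> real"
  assumes "L > 0" and cont: "continuous_on UNIV q" and periodic: "\<And>x. q (x + L) = q x"
    and mean_zero: "integral {0..L} q = 0"
  obtains F where "\<And>x. (F has_real_derivative q x) (at x)" and "\<And>x. F (x + L) = F x"
proof -
  have "\<exists>F. \<forall>x :: real. (-\<infinity>::ereal) < x \<longrightarrow> x < (\<infinity>::ereal) \<longrightarrow> (F has_vector_derivative q x) (at x)"
    by (rule einterval_antiderivative) (use cont continuous_on_eq_continuous_at[OF open_UNIV] in auto)
  then obtain F where F: "\<And>x. (F has_real_derivative q x) (at x)"
    by (auto simp: has_real_derivative_iff_has_vector_derivative)
  have "F L - F 0 = 0"
    using has_integral_antiderivative[OF F, of 0 L] \<open>L > 0\<close> mean_zero by (simp add: integral_unique)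
  moreover have "((\<lambda>x. F (x + L) - F x) has_real_derivative 0) (at x)" for x
    using DERIV_diff[OF DERIV_chain2[OF F, of "\<lambda>x. x + L"] F[of x]] periodic
    by (force intro: derivative_eq_intros)
  ultimately have "F (x + L) = F x" for x
    using DERIV_isconst_all[of "\<lambda>x. F (x + L) - F x" x 0] by simp
  with F show ?thesis by (rule that)
qed

lemma per_C2_test_with_second_derivative:
  fixes q :: "real \<Rightarrow> real"
  assumes "L > 0" and cont: "continuous_on UNIV q" and periodic: "\<And>x. q (x + L) = q x"
    and mean_zero: "integral {0..L} q = 0"
  obtains \<phi> \<phi>' where "per_C2_test L \<phi> \<phi>' q"
proof -
  obtain F where F: "\<And>x. (F has_real_derivative q x) (at x)" and F_periodic: "\<And>x. F (x + L) = F x"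
    using periodic_antiderivative[OF assms] by blast
  have F_cont: "continuous_on UNIV F"
    using F by (meson DERIV_isCont continuous_at_imp_continuous_on)
  define \<phi>' where "\<phi>' x = F x - integral {0..L} F / L" for x
  have "integral {0..L} \<phi>' = integral {0..L} F - integral {0..L} (\<lambda>_. integral {0..L} F / L)"
    unfolding \<phi>'_def
    by (rule integral_diff[OF integrable_continuous_interval integrable_const_ivl])
       (rule continuous_on_subset[OF F_cont], simp)
  then have "integral {0..L} \<phi>' = 0" using \<open>L > 0\<close> by simp
  moreover have "continuous_on UNIV \<phi>'" unfolding \<phi>'_def by (intro continuous_intros F_cont)
  moreover have "\<phi>' (x + L) = \<phi>' x" for x unfolding \<phi>'_def using F_periodic by simp
  ultimately obtain \<phi> where "\<And>x. (\<phi> has_real_derivative \<phi>' x) (at x)" and "\<And>x. \<phi> (x + L) = \<phi> x"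
    using periodic_antiderivative[OF \<open>L > 0\<close>, of \<phi>'] by blast
  moreover have "(\<phi>' has_real_derivative q x) (at x)" for x
    unfolding \<phi>'_def using DERIV_diff[OF F DERIV_const] by simp
  ultimately have "per_C2_test L \<phi> \<phi>' q"
    unfolding per_C2_test_def using cont by blast
  then show ?thesis by (rule that)
qed

lemma continuous_on_integral_square_eq_0:
  fixes \<psi> :: "real \<Rightarrow> real"
  assumes cont: "continuous_on {a..b} \<psi>" and "integral {a..b} (\<lambda>x. (\<psi> x)\<^sup>2) = 0" and "a < b"
    and x: "x \<in> {a..b}"
  shows "\<psi> x = 0"
proof -
  have sq_cont: "continuous_on {a..b} (\<lambda>x. (\<psi> x)\<^sup>2)" by (intro continuous_intros cont)
  have "((\<lambda>x. (\<psi> x)\<^sup>2) has_integral 0) {a..b}"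
    using integrable_continuous_interval[OF sq_cont] assms(2) by (metis has_integral_integral)
  then have "(\<psi> x)\<^sup>2 = 0"
    by (intro has_integral_0_cbox_imp_0[of a b]) (use sq_cont x \<open>a < b\<close> in auto)
  then show ?thesis by simp
qed

lemma du_Bois_Reymond_periodic:
  fixes e :: "real \<Rightarrow> real"
  assumes L: "L > 0" and cont: "continuous_on {0..L} e" and e_per: "e 0 = e L"
    and orth: "\<And>\<phi> \<phi>' \<phi>''. per_C2_test L \<phi> \<phi>' \<phi>'' \<Longrightarrow> (LINT x:{0..L}|lborel. e x * \<phi>'' x) = 0"
  shows "\<forall>x\<in>{0..L}. e x = e 0"
proof -
  define m where "m = integral {0..L} e / L"
  define \<psi> where "\<psi> x = e x - m" for x
  have \<psi>_cont: "continuous_on {0..L} \<psi>" unfolding \<psi>_def by (intro continuous_intros cont)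
  have \<psi>_per: "\<psi> 0 = \<psi> L" using e_per by (simp add: \<psi>_def)
  have "integral {0..L} \<psi> = integral {0..L} e - integral {0..L} (\<lambda>_. m)"
    unfolding \<psi>_def by (rule integral_diff[OF integrable_continuous_interval[OF cont] integrable_const_ivl])
  then have \<psi>_mean: "integral {0..L} \<psi> = 0" using L by (simp add: m_def)
  define q where "q = per_ext L \<psi>"
  have q_eq: "x \<in> {0..L} \<Longrightarrow> q x = \<psi> x" for x unfolding q_def by (rule per_ext_eq[OF L \<psi>_per])
  have q_cont: "continuous_on UNIV q" unfolding q_def by (rule continuous_on_per_ext[OF L \<psi>_per \<psi>_cont])
  obtain \<phi> \<phi>' where "per_C2_test L \<phi> \<phi>' q"
  proof (rule per_C2_test_with_second_derivative[OF L q_cont])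
    show "q (x + L) = q x" for x unfolding q_def by (rule per_ext_add_period[OF L])
    show "integral {0..L} q = 0" using \<psi>_mean integral_cong[of "{0..L}" q \<psi>] q_eq by simp
  qed
  from orth[OF this] have "(LINT x:{0..L}|lborel. e x * q x) = 0" .
  moreover have "set_integrable lborel {0..L} (\<lambda>x. e x * q x)"
    unfolding set_integrable_def
    by (rule borel_integrable_compact[OF compact_Icc])
       (intro continuous_intros cont continuous_on_subset[OF q_cont], simp)
  ultimately have "integral {0..L} (\<lambda>x. e x * q x) = 0"
    using set_borel_integral_eq_integral(2) by metis
  then have e\<psi>: "integral {0..L} (\<lambda>x. e x * \<psi> x) = 0"
    using integral_cong[of "{0..L}" "\<lambda>x. e x * q x" "\<lambda>x. e x * \<psi> x"] q_eq by simp
  have "integral {0..L} (\<lambda>x. (\<psi> x)\<^sup>2) = integral {0..L} (\<lambda>x. e x * \<psi> x - m * \<psi> x)"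
    by (rule integral_cong) (simp add: \<psi>_def power2_eq_square algebra_simps)
  also have "\<dots> = 0"
    using integral_diff[of "\<lambda>x. e x * \<psi> x" "{0..L}" "\<lambda>x. m * \<psi> x"] e\<psi> \<psi>_mean
    by (simp add: integrable_continuous_interval continuous_intros cont \<psi>_cont)
  finally have "x \<in> {0..L} \<Longrightarrow> \<psi> x = 0" for x
    using continuous_on_integral_square_eq_0[OF \<psi>_cont _ L] by simp
  then show ?thesis using L by (auto simp: \<psi>_def)
qed

section \<open>Second antiderivatives of square-integrable functions\<close>

definition cumulative_integral :: "(real \<Rightarrow> real) \<Rightarrow> real \<Rightarrow> real" where
  "cumulative_integral G x = (\<integral>s. G s * indicator {..<x} s \<partial>lborel)"

text \<open>The second antiderivative of G; its derivative is cumulative_integral G.\<close>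

definition ramp_integral :: "(real \<Rightarrow> real) \<Rightarrow> real \<Rightarrow> real" where
  "ramp_integral G x = (\<integral>s. G s * max 0 (x - s) \<partial>lborel)"

lemma integrable_mult_continuous_on_support:
  fixes G \<phi> :: "real \<Rightarrow> real"
  assumes G: "integrable lborel G" and supp: "\<And>s. s \<notin> {a..b} \<Longrightarrow> G s = 0"
    and \<phi>: "continuous_on {a..b} \<phi>"
  shows "integrable lborel (\<lambda>s. G s * \<phi> s)"
proof -
  have "\<exists>B. \<forall>s\<in>{a..b}. \<bar>\<phi> s\<bar> \<le> B"
    using compact_imp_bounded[OF compact_continuous_image[OF \<phi> compact_Icc]] by (auto simp: bounded_iff)
  then obtain B where B: "\<And>s. s \<in> {a..b} \<Longrightarrow> \<bar>\<phi> s\<bar> \<le> B" by blast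
  have [measurable]: "G \<in> borel_measurable lborel" using G by auto
  have [measurable]: "(\<lambda>s. indicator {a..b} s * \<phi> s) \<in> borel_measurable lborel"
    using borel_measurable_continuous_on_indicator[OF _ \<phi>] by simp
  have "(\<lambda>s. G s * (indicator {a..b} s * \<phi> s)) \<in> borel_measurable lborel" by measurable
  moreover have "G s * (indicator {a..b} s * \<phi> s) = G s * \<phi> s" for s
    using supp[of s] by (auto simp: indicator_def)
  ultimately have [measurable]: "(\<lambda>s. G s * \<phi> s) \<in> borel_measurable lborel" by simp
  show ?thesis
  proof (rule Bochner_Integration.integrable_bound[where f = "\<lambda>s. B * G s"])
    show "AE s in lborel. norm (G s * \<phi> s) \<le> norm (B * G s)"
    proof (rule AE_I2)
      fix s
      show "norm (G s * \<phi> s) \<le> norm (B * G s)"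
      proof (cases "s \<in> {a..b}")
        case True
        then have "\<bar>G s\<bar> * \<bar>\<phi> s\<bar> \<le> \<bar>G s\<bar> * \<bar>B\<bar>" using B by (intro mult_left_mono) force+
        then show ?thesis by (simp add: abs_mult mult_ac)
      qed (use supp in simp)
    qed
  qed (use G in auto)
qed

lemma integrable_ramp_integrand:
  fixes G :: "real \<Rightarrow> real"
  assumes "integrable lborel G" and "\<And>s. s \<notin> {a..b} \<Longrightarrow> G s = 0"
  shows "integrable lborel (\<lambda>s. G s * max 0 (x - s))"
  by (rule integrable_mult_continuous_on_support[where a = a and b = b])
     (use assms in \<open>auto intro!: continuous_intros\<close>)

lemma continuous_on_ramp_integral:
  fixes G :: "real \<Rightarrow> real"
  assumes G: "integrable lborel G" and supp: "\<And>s. s \<notin> {a..b} \<Longrightarrow> G s = 0"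
  shows "continuous_on UNIV (ramp_integral G)"
proof (rule lipschitz_on_continuous_on[OF lipschitz_onI])
  fix x y :: real
  have integrable: "integrable lborel (\<lambda>s. G s * max 0 (z - s))" for z
    using integrable_ramp_integrand[OF G supp] .
  have "\<bar>ramp_integral G x - ramp_integral G y\<bar>
      = \<bar>\<integral>s. G s * max 0 (x - s) - G s * max 0 (y - s) \<partial>lborel\<bar>"
    by (simp add: ramp_integral_def Bochner_Integration.integral_diff[OF integrable integrable])
  also have "\<dots> \<le> (\<integral>s. \<bar>G s\<bar> * \<bar>x - y\<bar> \<partial>lborel)"
  proof (rule order_trans[OF integral_abs_bound integral_mono])
    show "\<bar>G s * max 0 (x - s) - G s * max 0 (y - s)\<bar> \<le> \<bar>G s\<bar> * \<bar>x - y\<bar>" for s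
    proof -
      have "\<bar>max 0 (x - s) - max 0 (y - s)\<bar> \<le> \<bar>x - y\<bar>" by (auto simp: max_def abs_if)
      then show ?thesis by (simp add: right_diff_distrib[symmetric] abs_mult mult_left_mono)
    qed
  qed (use G integrable in auto)
  finally show "dist (ramp_integral G x) (ramp_integral G y) \<le> (\<integral>s. \<bar>G s\<bar> \<partial>lborel) * dist x y"
    by (simp add: dist_real_def mult.commute)
qed (rule Bochner_Integration.integral_nonneg, simp)

lemma (in pair_sigma_finite) integrable_product_mult:
  fixes a b :: "_ \<Rightarrow> real"
  assumes a: "integrable M1 a" and b: "integrable M2 b"
  shows "integrable (M1 \<Otimes>\<^sub>M M2) (\<lambda>(x, y). a x * b y)"
proof (rule Fubini_integrable)
  have [measurable]: "a \<in> borel_measurable M1" "b \<in> borel_measurable M2" using a b by auto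
  show "(\<lambda>(x, y). a x * b y) \<in> borel_measurable (M1 \<Otimes>\<^sub>M M2)" by measurable
qed (use a b in \<open>simp_all add: abs_mult\<close>)

lemma integral_second_derivative_mult_ramp:
  fixes \<phi> \<phi>' \<phi>'' :: "real \<Rightarrow> real"
  assumes \<phi>: "\<And>x. (\<phi> has_real_derivative \<phi>' x) (at x)"
    and \<phi>': "\<And>x. (\<phi>' has_real_derivative \<phi>'' x) (at x)" and \<phi>''_cont: "continuous_on UNIV \<phi>''"
    and s: "s \<in> {a..b}"
  shows "(\<integral>x. indicator {a..b} x * \<phi>'' x * max 0 (x - s) \<partial>lborel) = (b - s) * \<phi>' b - \<phi> b + \<phi> s"
proof -
  have cont: "continuous_on {s..b} (\<lambda>x. (x - s) * \<phi>'' x)"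
    by (intro continuous_intros continuous_on_subset[OF \<phi>''_cont]) simp
  have "(\<integral>x. indicator {a..b} x * \<phi>'' x * max 0 (x - s) \<partial>lborel) = (LINT x:{s..b}|lborel. (x - s) * \<phi>'' x)"
    unfolding set_lebesgue_integral_def using s
    by (intro Bochner_Integration.integral_cong) (auto simp: indicator_def max_def)
  also have "\<dots> = integral {s..b} (\<lambda>x. (x - s) * \<phi>'' x)"
    by (rule set_borel_integral_eq_integral(2))
       (unfold set_integrable_def, rule borel_integrable_compact[OF compact_Icc cont])
  also have "\<dots> = ((b - s) * \<phi>' b - \<phi> b) - ((s - s) * \<phi>' s - \<phi> s)"
  proof (rule integral_unique, rule has_integral_antiderivative)
    show "((\<lambda>x. (x - s) * \<phi>' x - \<phi> x) has_real_derivative (x - s) * \<phi>'' x) (at x)" for x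
      using \<phi>[of x] \<phi>'[of x] by (auto intro!: derivative_eq_intros)
  qed (use s in auto)
  finally show ?thesis by simp
qed

lemma integrable_ramp_kernel:
  fixes G \<psi> :: "real \<Rightarrow> real"
  assumes G: "integrable lborel G" and supp: "\<And>s. s \<notin> {a..b} \<Longrightarrow> G s = 0"
    and \<psi>: "continuous_on {a..b} \<psi>"
  shows "integrable (lborel \<Otimes>\<^sub>M lborel) (\<lambda>(x, s). indicator {a..b} x * \<psi> x * (G s * max 0 (x - s)))"
proof (rule Bochner_Integration.integrable_bound)
  define h where "h x = (b - a) * (indicator {a..b} x * \<bar>\<psi> x\<bar>)" for x
  have "integrable lborel (\<lambda>x. indicator {a..b} x *\<^sub>R \<bar>\<psi> x\<bar>)"
    by (rule borel_integrable_compact[OF compact_Icc]) (intro continuous_intros \<psi>)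
  then show "integrable (lborel \<Otimes>\<^sub>M lborel) (\<lambda>(x, s). h x * \<bar>G s\<bar>)"
    by (intro lborel_pair.integrable_product_mult) (use G in \<open>auto simp: h_def\<close>)
  show "AE p in lborel \<Otimes>\<^sub>M lborel.
      norm ((\<lambda>(x, s). indicator {a..b} x * \<psi> x * (G s * max 0 (x - s))) p) \<le> norm ((\<lambda>(x, s). h x * \<bar>G s\<bar>) p)"
  proof (rule AE_I2, clarify)
    fix x s
    show "norm (indicator {a..b} x * \<psi> x * (G s * max 0 (x - s))) \<le> norm (h x * \<bar>G s\<bar>)"
    proof (cases "x \<in> {a..b} \<and> s \<in> {a..b}")
      case True
      then have "\<bar>\<psi> x\<bar> * \<bar>G s\<bar> * \<bar>max 0 (x - s)\<bar> \<le> \<bar>\<psi> x\<bar> * \<bar>G s\<bar> * (b - a)"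
        by (intro mult_left_mono) auto
      then show ?thesis using True by (simp add: h_def abs_mult mult_ac)
    qed (use supp in \<open>auto simp: h_def\<close>)
  qed
  have [measurable]: "G \<in> borel_measurable lborel" using G by auto
  have [measurable]: "(\<lambda>x. indicator {a..b} x * \<psi> x) \<in> borel_measurable lborel"
    using borel_measurable_continuous_on_indicator[OF _ \<psi>] by simp
  show "(\<lambda>(x, s). indicator {a..b} x * \<psi> x * (G s * max 0 (x - s))) \<in> borel_measurable (lborel \<Otimes>\<^sub>M lborel)"
    by measurable
qed

lemma integral_ramp_integral_mult_second_derivative:
  fixes G \<phi> \<phi>' \<phi>'' :: "real \<Rightarrow> real"
  assumes G: "integrable lborel G" and supp: "\<And>s. s \<notin> {a..b} \<Longrightarrow> G s = 0"
    and \<phi>: "\<And>x. (\<phi> has_real_derivative \<phi>' x) (at x)"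
    and \<phi>': "\<And>x. (\<phi>' has_real_derivative \<phi>'' x) (at x)" and \<phi>''_cont: "continuous_on UNIV \<phi>''"
  shows "(LINT x:{a..b}|lborel. ramp_integral G x * \<phi>'' x)
     = \<phi>' b * ramp_integral G b - \<phi> b * (\<integral>s. G s \<partial>lborel) + (\<integral>s. G s * \<phi> s \<partial>lborel)"
proof -
  have \<phi>_cont: "continuous_on UNIV \<phi>"
    using \<phi> by (meson DERIV_isCont continuous_at_imp_continuous_on)
  define f where "f x s = indicator {a..b} x * \<phi>'' x * (G s * max 0 (x - s))" for x s
  have "integrable (lborel \<Otimes>\<^sub>M lborel) (case_prod f)"
    unfolding f_def using integrable_ramp_kernel[OF G supp continuous_on_subset[OF \<phi>''_cont subset_UNIV]] .
  then have Fubini: "(\<integral>x. \<integral>s. f x s \<partial>lborel \<partial>lborel) = (\<integral>s. \<integral>x. f x s \<partial>lborel \<partial>lborel)"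
    by (rule lborel_pair.Fubini_integral[symmetric])
  have inner: "(\<integral>x. f x s \<partial>lborel) = \<phi>' b * (G s * max 0 (b - s)) - \<phi> b * G s + G s * \<phi> s" for s
  proof (cases "s \<in> {a..b}")
    case True
    have "(\<integral>x. f x s \<partial>lborel) = G s * (\<integral>x. indicator {a..b} x * \<phi>'' x * max 0 (x - s) \<partial>lborel)"
      unfolding f_def by (simp add: mult_ac)
    also have "\<dots> = G s * ((b - s) * \<phi>' b - \<phi> b + \<phi> s)"
      using integral_second_derivative_mult_ramp[OF \<phi> \<phi>' \<phi>''_cont True] by simp
    finally show ?thesis using True by (simp add: algebra_simps)
  qed (use supp in \<open>simp add: f_def\<close>)
  have "(\<integral>s. f x s \<partial>lborel) = indicator {a..b} x * \<phi>'' x * ramp_integral G x" for x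
    unfolding f_def ramp_integral_def by (rule integral_mult_right_zero)
  then have "(LINT x:{a..b}|lborel. ramp_integral G x * \<phi>'' x) = (\<integral>x. \<integral>s. f x s \<partial>lborel \<partial>lborel)"
    unfolding set_lebesgue_integral_def by (simp add: mult_ac)
  also have "\<dots> = (\<integral>s. \<phi>' b * (G s * max 0 (b - s)) - \<phi> b * G s + G s * \<phi> s \<partial>lborel)"
    unfolding Fubini inner ..
  also have "\<dots> = \<phi>' b * ramp_integral G b - \<phi> b * (\<integral>s. G s \<partial>lborel) + (\<integral>s. G s * \<phi> s \<partial>lborel)"
  proof -
    have "integrable lborel (\<lambda>s. G s * max 0 (b - s))" by (rule integrable_ramp_integrand[OF G supp])
    moreover have "integrable lborel (\<lambda>s. G s * \<phi> s)"
      by (rule integrable_mult_continuous_on_support[OF G supp continuous_on_subset[OF \<phi>_cont subset_UNIV]])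
    ultimately show ?thesis using G by (simp add: ramp_integral_def)
  qed
  finally show ?thesis .
qed

lemma ramp_remainder_bound:
  fixes x y s :: real
  shows "\<bar>max 0 (y - s) - max 0 (x - s) - indicator {..<x} s * (y - x)\<bar>
     \<le> \<bar>y - x\<bar> * indicator {min x y..max x y} s"
  by (auto simp: indicator_def max_def min_def abs_if)

lemma abs_le_square_plus_inverse:
  fixes a c :: real
  assumes "c > 0"
  shows "\<bar>a\<bar> \<le> a\<^sup>2 * c / 2 + 1 / (2 * c)"
proof -
  have "0 \<le> (c * \<bar>a\<bar> - 1)\<^sup>2" by simp
  then have "2 * c * \<bar>a\<bar> \<le> c\<^sup>2 * a\<^sup>2 + 1" by (simp add: power2_eq_square algebra_simps)
  then show ?thesis using assms by (simp add: field_simps power2_eq_square)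
qed

lemma ramp_integral_remainder:
  fixes G :: "real \<Rightarrow> real" and x y :: real
  assumes G: "integrable lborel G" and supp: "\<And>s. s \<notin> {a..b} \<Longrightarrow> G s = 0"
  defines "\<rho> \<equiv> \<lambda>s. max 0 (y - s) - max 0 (x - s) - indicator {..<x} s * (y - x)"
  shows "integrable lborel (\<lambda>s. G s * \<rho> s)"
    and "ramp_integral G y - ramp_integral G x - cumulative_integral G x * (y - x) = (\<integral>s. G s * \<rho> s \<partial>lborel)"
proof -
  have ramp_int: "integrable lborel (\<lambda>s. G s * max 0 (z - s))" for z
    by (rule integrable_ramp_integrand[OF G supp])
  have cum_int: "integrable lborel (\<lambda>s. G s * indicator {..<x} s)"
    by (rule integrable_real_mult_indicator[OF _ G]) simp
  have G\<rho>: "G s * \<rho> s = G s * max 0 (y - s) - G s * max 0 (x - s) - (y - x) * (G s * indicator {..<x} s)" for s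
    by (simp add: \<rho>_def algebra_simps)
  show "integrable lborel (\<lambda>s. G s * \<rho> s)"
    unfolding G\<rho> using ramp_int cum_int by simp
  show "ramp_integral G y - ramp_integral G x - cumulative_integral G x * (y - x) = (\<integral>s. G s * \<rho> s \<partial>lborel)"
    unfolding G\<rho> using ramp_int cum_int by (simp add: ramp_integral_def cumulative_integral_def mult.commute)
qed

lemma ramp_integral_taylor_bound:
  fixes G :: "real \<Rightarrow> real"
  assumes G: "integrable lborel G" and supp: "\<And>s. s \<notin> {a..b} \<Longrightarrow> G s = 0"
    and G_sq: "integrable lborel (\<lambda>s. (G s)\<^sup>2)"
  shows "\<bar>ramp_integral G y - ramp_integral G x - cumulative_integral G x * (y - x)\<bar>
     \<le> ((\<integral>s. (G s)\<^sup>2 \<partial>lborel) + 1) / 2 * \<bar>y - x\<bar> * sqrt \<bar>y - x\<bar>"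
proof (cases "y = x")
  case False
  define d where "d = \<bar>y - x\<bar>"
  define c where "c = sqrt d"
  define I where "I = {min x y..max x y}"
  define \<rho> where "\<rho> s = max 0 (y - s) - max 0 (x - s) - indicator {..<x} s * (y - x)" for s
  note remainder = ramp_integral_remainder[where a = a and b = b, OF G supp, of y x, folded \<rho>_def]
  have "d > 0" "c > 0" using False by (auto simp: d_def c_def)
  have I_int: "integrable lborel (indicator I :: real \<Rightarrow> real)" unfolding I_def by simp
  \<comment> \<open>AM-GM with weight c = sqrt d makes both terms of order d powr (3/2)\<close>
  have pointwise: "\<bar>G s * \<rho> s\<bar> \<le> d * ((G s)\<^sup>2 * c / 2 + indicator I s / (2 * c))" for s
  proof -
    have "\<bar>G s * \<rho> s\<bar> \<le> \<bar>G s\<bar> * (d * indicator I s)"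
      unfolding abs_mult by (rule mult_left_mono) (use ramp_remainder_bound[of y s x] in \<open>auto simp: \<rho>_def d_def I_def\<close>)
    also have "\<dots> \<le> d * ((G s)\<^sup>2 * c / 2 + indicator I s / (2 * c))"
      using abs_le_square_plus_inverse[OF \<open>c > 0\<close>, of "G s"] \<open>d > 0\<close> \<open>c > 0\<close>
      by (auto simp: indicator_def)
    finally show ?thesis .
  qed
  have "\<bar>\<integral>s. G s * \<rho> s \<partial>lborel\<bar> \<le> (\<integral>s. d * ((G s)\<^sup>2 * c / 2 + indicator I s / (2 * c)) \<partial>lborel)"
    by (rule order_trans[OF integral_abs_bound integral_mono[OF _ _ pointwise]])
       (use remainder(1) G_sq I_int in simp_all)
  also have "\<dots> = d * ((\<integral>s. (G s)\<^sup>2 \<partial>lborel) * c / 2 + d / (2 * c))"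
    using G_sq I_int by (simp add: I_def d_def max_def min_def)
  also have "\<dots> = ((\<integral>s. (G s)\<^sup>2 \<partial>lborel) + 1) / 2 * d * c"
    using \<open>c > 0\<close> by (simp add: c_def field_simps)
  finally show ?thesis using remainder(2) by (simp add: d_def c_def \<rho>_def)
qed simp

lemma cumulative_integral_left_end:
  assumes "\<And>s. s \<notin> {a..b} \<Longrightarrow> G s = 0"
  shows "cumulative_integral G a = 0"
proof -
  have "(\<lambda>s. G s * indicator {..<a} s) = (\<lambda>_. 0)"
    using assms by (auto simp: indicator_def fun_eq_iff)
  then show ?thesis by (simp add: cumulative_integral_def)
qed

lemma cumulative_integral_right_end:
  assumes G: "integrable lborel G" and supp: "\<And>s. s \<notin> {a..b} \<Longrightarrow> G s = 0"
  shows "cumulative_integral G b = (\<integral>s. G s \<partial>lborel)"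
  unfolding cumulative_integral_def
proof (rule integral_cong_AE)
  have [measurable]: "G \<in> borel_measurable lborel" using G by auto
  show "AE s in lborel. G s * indicator {..<b} s = G s"
    using AE_lborel_singleton[of b] by eventually_elim (use supp in \<open>auto simp: indicator_def\<close>)
qed (use G in auto)

lemma ramp_integral_left_end:
  assumes "\<And>s. s \<notin> {a..b} \<Longrightarrow> G s = 0"
  shows "ramp_integral G a = 0"
proof -
  have "(\<lambda>s. G s * max 0 (a - s)) = (\<lambda>_. 0)" using assms by (force simp: fun_eq_iff)
  then show ?thesis by (simp add: ramp_integral_def)
qed

lemma per_C2_testD:
  assumes "per_C2_test L \<phi> \<phi>' \<phi>''"
  shows "\<And>x. (\<phi> has_real_derivative \<phi>' x) (at x)" and "\<And>x. (\<phi>' has_real_derivative \<phi>'' x) (at x)"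
    and "continuous_on UNIV \<phi>''" and "\<phi> L = \<phi> 0"
  using assms unfolding per_C2_test_def by (auto dest: spec[of _ 0])

lemma per_C2_test_integral_mult_second_derivative:
  assumes "per_C2_test L \<phi> \<phi>' \<phi>''" and "L \<ge> 0"
  shows "(LINT x:{0..L}|lborel. x * \<phi>'' x) = L * \<phi>' L"
proof -
  have "(LINT x:{0..L}|lborel. x * \<phi>'' x) = (\<integral>x. indicator {0..L} x * \<phi>'' x * max 0 (x - 0) \<partial>lborel)"
    unfolding set_lebesgue_integral_def by (rule Bochner_Integration.integral_cong) (auto simp: indicator_def)
  also have "\<dots> = L * \<phi>' L"
    using integral_second_derivative_mult_ramp[OF per_C2_testD(1-3)[OF assms(1)], of 0 0 L]
      per_C2_testD(4)[OF assms(1)] \<open>L \<ge> 0\<close> by simp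
  finally show ?thesis .
qed

lemma weak_dxx_per_ramp_representation:
  fixes v g :: "real \<Rightarrow> real"
  assumes L: "L > 0" and v_cont: "continuous_on {0..L} v" and v_per: "v 0 = v L"
    and weak: "weak_dxx_per L v g"
  defines "G \<equiv> \<lambda>s. indicator {0..L} s * g s"
  shows "(\<integral>s. G s \<partial>lborel) = 0"
    and "\<forall>x\<in>{0..L}. v x = v 0 + ramp_integral G x - ramp_integral G L / L * x"
proof -
  have G: "integrable lborel G" and supp: "\<And>s. s \<notin> {0..L} \<Longrightarrow> G s = 0"
    using weak by (simp_all add: weak_dxx_per_def set_integrable_def G_def)
  have test: "(LINT x:{0..L}|lborel. v x * \<phi>'' x) = (\<integral>s. G s * \<phi> s \<partial>lborel)"
    if "per_C2_test L \<phi> \<phi>' \<phi>''" for \<phi> \<phi>' \<phi>''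
    using weak that by (simp add: weak_dxx_per_def set_lebesgue_integral_def G_def mult_ac)
  have "per_C2_test L (\<lambda>_. 1) (\<lambda>_. 0) (\<lambda>_. 0)"
    unfolding per_C2_test_def by auto
  from test[OF this] show G_mean: "(\<integral>s. G s \<partial>lborel) = 0" by simp
  define A where "A = ramp_integral G L"
  \<comment> \<open>e has zero weak second derivative, and the linear term makes it periodic\<close>
  define e where "e x = v x - ramp_integral G x + A / L * x" for x
  have ramp_cont: "continuous_on UNIV (ramp_integral G)" by (rule continuous_on_ramp_integral[OF G supp])
  have ramp_0: "ramp_integral G 0 = 0" by (rule ramp_integral_left_end[OF supp])
  then have e_per: "e 0 = e L" using L v_per by (simp add: e_def A_def)
  have e_cont: "continuous_on {0..L} e"
    unfolding e_def by (intro continuous_intros v_cont continuous_on_subset[OF ramp_cont]) simp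
  have "(LINT x:{0..L}|lborel. e x * \<phi>'' x) = 0" if \<phi>: "per_C2_test L \<phi> \<phi>' \<phi>''" for \<phi> \<phi>' \<phi>''
  proof -
    have integrable: "set_integrable lborel {0..L} h" if "continuous_on {0..L} h" for h :: "real \<Rightarrow> real"
      unfolding set_integrable_def using borel_integrable_compact[OF compact_Icc that] by simp
    have \<phi>''_cont: "continuous_on {0..L} \<phi>''" by (rule continuous_on_subset[OF per_C2_testD(3)[OF \<phi>]]) simp
    have "(LINT x:{0..L}|lborel. e x * \<phi>'' x)
        = (LINT x:{0..L}|lborel. v x * \<phi>'' x - ramp_integral G x * \<phi>'' x + A / L * (x * \<phi>'' x))"
      by (rule set_lebesgue_integral_cong) (auto simp: e_def algebra_simps)
    also have "\<dots> = (LINT x:{0..L}|lborel. v x * \<phi>'' x) - (LINT x:{0..L}|lborel. ramp_integral G x * \<phi>'' x)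
        + A / L * (LINT x:{0..L}|lborel. x * \<phi>'' x)"
      using L by (subst set_integral_add set_integral_diff set_integral_mult_right,
          auto intro!: integrable continuous_intros v_cont \<phi>''_cont continuous_on_subset[OF ramp_cont])+
    also have "\<dots> = 0"
      using integral_ramp_integral_mult_second_derivative[OF G supp per_C2_testD(1-3)[OF \<phi>]]
        test[OF \<phi>] per_C2_test_integral_mult_second_derivative[OF \<phi>] G_mean L
      by (simp add: A_def)
    finally show ?thesis .
  qed
  then have "\<forall>x\<in>{0..L}. e x = e 0" by (rule du_Bois_Reymond_periodic[OF L e_cont e_per])
  then show "\<forall>x\<in>{0..L}. v x = v 0 + ramp_integral G x - ramp_integral G L / L * x"
    using ramp_0 by (force simp: e_def A_def)
qed

lemma weak_dxx_per_taylor_bound: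
  fixes v g :: "real \<Rightarrow> real"
  assumes L: "L > 0" and v_cont: "continuous_on {0..L} v" and v_per: "v 0 = v L"
    and weak: "weak_dxx_per L v g"
    and g_sq: "(\<integral>\<^sup>+ x \<in> {0..L}. ennreal ((g x)\<^sup>2) \<partial>lborel) \<noteq> \<infinity>"
  obtains K m where "K \<ge> 0" and "m 0 = m L"
    and "\<forall>x\<in>{0..L}. \<forall>y\<in>{0..L}. \<bar>v y - v x - m x * (y - x)\<bar> \<le> K * \<bar>y - x\<bar> * sqrt \<bar>y - x\<bar>"
proof
  define G where "G = (\<lambda>s. indicator {0..L} s * g s)"
  have G: "integrable lborel G" and supp: "\<And>s. s \<notin> {0..L} \<Longrightarrow> G s = 0"
    using weak by (simp_all add: weak_dxx_per_def set_integrable_def G_def)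
  note representation = weak_dxx_per_ramp_representation[OF L v_cont v_per weak, folded G_def]
  have [measurable]: "G \<in> borel_measurable lborel" using G by auto
  have G_sq: "integrable lborel (\<lambda>s. (G s)\<^sup>2)"
  proof (rule integrableI_bounded)
    have "(\<integral>\<^sup>+ s. ennreal (norm ((G s)\<^sup>2)) \<partial>lborel) = (\<integral>\<^sup>+ x \<in> {0..L}. ennreal ((g x)\<^sup>2) \<partial>lborel)"
      by (rule nn_integral_cong) (auto simp: G_def indicator_def)
    then show "(\<integral>\<^sup>+ s. ennreal (norm ((G s)\<^sup>2)) \<partial>lborel) < \<infinity>" using g_sq by (simp add: less_top)
  qed measurable
  define K where "K = ((\<integral>s. (G s)\<^sup>2 \<partial>lborel) + 1) / 2"
  define m where "m x = cumulative_integral G x - ramp_integral G L / L" for x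
  show "K \<ge> 0" unfolding K_def by (simp add: Bochner_Integration.integral_nonneg)
  show "m 0 = m L"
    using cumulative_integral_left_end[OF supp] cumulative_integral_right_end[OF G supp] representation(1)
    by (simp add: m_def)
  show "\<forall>x\<in>{0..L}. \<forall>y\<in>{0..L}. \<bar>v y - v x - m x * (y - x)\<bar> \<le> K * \<bar>y - x\<bar> * sqrt \<bar>y - x\<bar>"
  proof (intro ballI)
    fix x y assume "x \<in> {0..L}" "y \<in> {0..L}"
    then have "v x = v 0 + ramp_integral G x - ramp_integral G L / L * x"
      and "v y = v 0 + ramp_integral G y - ramp_integral G L / L * y"
      using representation(2) by blast+
    then have "v y - v x - m x * (y - x) = ramp_integral G y - ramp_integral G x - cumulative_integral G x * (y - x)"
      using L by (simp add: m_def field_simps)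
    then show "\<bar>v y - v x - m x * (y - x)\<bar> \<le> K * \<bar>y - x\<bar> * sqrt \<bar>y - x\<bar>"
      using ramp_integral_taylor_bound[where a = 0 and b = L, OF G supp G_sq, of y x] by (simp add: K_def)
  qed
qed

section \<open>Vanishing derivative at zeros\<close>

lemma slope_nonneg_at_left_endpoint:
  fixes v :: "real \<Rightarrow> real"
  assumes "a < b" and "K \<ge> 0" and nonneg: "\<forall>y\<in>{a..b}. v y \<ge> 0"
    and expansion: "\<forall>y\<in>{a..b}. \<bar>v y - m * (y - a)\<bar> \<le> K * \<bar>y - a\<bar> * sqrt \<bar>y - a\<bar>"
  shows "m \<ge> 0"
proof (rule ccontr)
  assume "\<not> m \<ge> 0"
  then have m: "m < 0" by simp
  define d where "d = min (b - a) ((m / (K + 1))\<^sup>2)"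
  have d: "d > 0" "a + d \<in> {a..b}" using m \<open>K \<ge> 0\<close> \<open>a < b\<close> by (auto simp: d_def)
  have "sqrt d \<le> sqrt ((m / (K + 1))\<^sup>2)" by (rule real_sqrt_le_mono) (simp add: d_def)
  also have "\<dots> = - m / (K + 1)" using m \<open>K \<ge> 0\<close> by (simp add: abs_if divide_neg_pos)
  finally have "K * sqrt d \<le> K * (- m / (K + 1))" using \<open>K \<ge> 0\<close> by (rule mult_left_mono)
  also have "\<dots> < - m" using m \<open>K \<ge> 0\<close> by (simp add: field_simps)
  finally have small: "K * sqrt d < - m" .
  have "v (a + d) \<le> m * d + K * d * sqrt d"
    using expansion[rule_format, OF d(2)] d by (simp add: abs_le_iff)
  also have "\<dots> = d * (m + K * sqrt d)" by (simp add: algebra_simps)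
  also have "\<dots> < 0" using small d by (simp add: mult_pos_neg)
  finally show False using bspec[OF nonneg d(2)] by simp
qed

lemma slope_nonpos_at_right_endpoint:
  fixes v :: "real \<Rightarrow> real"
  assumes "a < b" and "K \<ge> 0" and nonneg: "\<forall>y\<in>{a..b}. v y \<ge> 0"
    and expansion: "\<forall>y\<in>{a..b}. \<bar>v y - m * (y - b)\<bar> \<le> K * \<bar>y - b\<bar> * sqrt \<bar>y - b\<bar>"
  shows "m \<le> 0"
proof -
  have "- m \<ge> 0"
  proof (rule slope_nonneg_at_left_endpoint[where v = "\<lambda>y. v (- y)" and a = "- b" and b = "- a"])
    show "\<forall>y\<in>{- b..- a}. v (- y) \<ge> 0"
      using nonneg by (auto simp: minus_le_iff le_minus_iff)
    show "\<forall>y\<in>{- b..- a}. \<bar>v (- y) - - m * (y - - b)\<bar> \<le> K * \<bar>y - - b\<bar> * sqrt \<bar>y - - b\<bar>"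
    proof
      fix y assume "y \<in> {- b..- a}"
      then have "- y \<in> {a..b}" by auto
      with expansion show "\<bar>v (- y) - - m * (y - - b)\<bar> \<le> K * \<bar>y - - b\<bar> * sqrt \<bar>y - - b\<bar>"
        by (force simp: algebra_simps abs_minus_commute)
    qed
  qed (use assms in auto)
  then show ?thesis by simp
qed

lemma nonneg_taylor_bound_at_zero:
  fixes v m :: "real \<Rightarrow> real"
  assumes "L > 0" and "K \<ge> 0" and nonneg: "\<forall>y\<in>{0..L}. v y \<ge> 0"
    and "v 0 = v L" and "m 0 = m L"
    and taylor: "\<forall>x\<in>{0..L}. \<forall>y\<in>{0..L}. \<bar>v y - v x - m x * (y - x)\<bar> \<le> K * \<bar>y - x\<bar> * sqrt \<bar>y - x\<bar>"
    and z: "z \<in> {0..L}" and "v z = 0"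
  shows "\<forall>y\<in>{0..L}. v y \<le> K * \<bar>y - z\<bar> * sqrt \<bar>y - z\<bar>"
proof -
  have at_zero: "\<forall>y\<in>{0..L}. \<bar>v y - m x * (y - x)\<bar> \<le> K * \<bar>y - x\<bar> * sqrt \<bar>y - x\<bar>"
    if "x \<in> {0..L}" "v x = 0" for x
    using bspec[OF taylor that(1)] that(2) by simp
  have right: "m x \<ge> 0" if "x \<in> {0..L}" "v x = 0" "x < L" for x
  proof (rule slope_nonneg_at_left_endpoint[where v = v, OF \<open>x < L\<close> \<open>K \<ge> 0\<close>])
    have "{x..L} \<subseteq> {0..L}" using that by auto
    then show "\<forall>y\<in>{x..L}. v y \<ge> 0" "\<forall>y\<in>{x..L}. \<bar>v y - m x * (y - x)\<bar> \<le> K * \<bar>y - x\<bar> * sqrt \<bar>y - x\<bar>"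
      using nonneg at_zero[OF that(1,2)] by blast+
  qed
  have left: "m x \<le> 0" if "x \<in> {0..L}" "v x = 0" "0 < x" for x
  proof (rule slope_nonpos_at_right_endpoint[where v = v, OF \<open>0 < x\<close> \<open>K \<ge> 0\<close>])
    have "{0..x} \<subseteq> {0..L}" using that by auto
    then show "\<forall>y\<in>{0..x}. v y \<ge> 0" "\<forall>y\<in>{0..x}. \<bar>v y - m x * (y - x)\<bar> \<le> K * \<bar>y - x\<bar> * sqrt \<bar>y - x\<bar>"
      using nonneg at_zero[OF that(1,2)] by blast+
  qed
  have "m z = 0"
  proof (cases "0 < z \<and> z < L")
    case True
    then show ?thesis using right[OF z \<open>v z = 0\<close>] left[OF z \<open>v z = 0\<close>] by linarith
  next
    case False
    \<comment> \<open>at an endpoint only one-sided signs are available; periodicity matches the two sides\<close>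
    then have "v 0 = 0" "v L = 0" using z \<open>v z = 0\<close> \<open>v 0 = v L\<close> by auto
    then have "m 0 \<ge> 0" "m L \<le> 0" using right[of 0] left[of L] \<open>L > 0\<close> by simp_all
    then show ?thesis using False z \<open>m 0 = m L\<close> by auto
  qed
  then show ?thesis using at_zero[OF z \<open>v z = 0\<close>] by (auto simp: abs_le_iff)
qed

lemma has_real_derivative_zero_if_powr_bound:
  fixes F :: "real \<Rightarrow> real"
  assumes "d > 0" and "1 < \<beta>" and "F x0 = 0"
    and bound: "\<And>x. \<bar>x - x0\<bar> < d \<Longrightarrow> \<bar>F x\<bar> \<le> C * \<bar>x - x0\<bar> powr \<beta>"
  shows "(F has_real_derivative 0) (at x0)"
  unfolding has_field_derivative_iff
proof (rule Lim_null_comparison)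
  show "\<forall>\<^sub>F x in at x0. norm ((F x - F x0) / (x - x0)) \<le> C * \<bar>x - x0\<bar> powr (\<beta> - 1)"
    unfolding eventually_at
  proof (intro exI[of _ d] conjI ballI impI)
    fix x assume x: "x \<noteq> x0 \<and> dist x x0 < d"
    then have pos: "\<bar>x - x0\<bar> > 0" by simp
    have "norm ((F x - F x0) / (x - x0)) = \<bar>F x\<bar> / \<bar>x - x0\<bar>"
      using \<open>F x0 = 0\<close> by (simp add: abs_divide)
    also have "\<dots> \<le> C * \<bar>x - x0\<bar> powr \<beta> / \<bar>x - x0\<bar>"
      using bound[of x] x pos by (simp add: dist_real_def divide_right_mono)
    also have "\<dots> = C * \<bar>x - x0\<bar> powr (\<beta> - 1)"
      using pos by (simp add: powr_diff)
    finally show "norm ((F x - F x0) / (x - x0)) \<le> C * \<bar>x - x0\<bar> powr (\<beta> - 1)" .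
  qed (use \<open>d > 0\<close> in auto)
  have "((\<lambda>x. \<bar>x - x0\<bar> powr (\<beta> - 1)) \<longlongrightarrow> 0) (at x0)"
    by (rule tendsto_zero_powrI) (use \<open>1 < \<beta>\<close> in \<open>auto intro!: tendsto_eq_intros\<close>)
  then show "((\<lambda>x. C * \<bar>x - x0\<bar> powr (\<beta> - 1)) \<longlongrightarrow> 0) (at x0)"
    using tendsto_mult_right_zero by blast
qed

lemma abs_mult_sqrt_abs: "\<bar>t\<bar> * sqrt \<bar>t\<bar> = \<bar>t\<bar> powr (3 / 2)"
proof (cases "t = 0")
  case False
  have "\<bar>t\<bar> powr (3 / 2) = \<bar>t\<bar> powr (1 + 1 / 2)" by simp
  also have "\<dots> = \<bar>t\<bar> powr 1 * \<bar>t\<bar> powr (1 / 2)" by (rule powr_add)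
  finally show ?thesis using False by (simp add: powr_half_sqrt)
qed simp

lemma weak_dxx_per_powr_growth_at_zeros:
  fixes f g :: "real \<Rightarrow> real"
  assumes L: "L > 0" and p: "1 < p"
    and f_cont: "continuous_on {0..L} f" and f_nonneg: "\<forall>x\<in>{0..L}. f x \<ge> 0" and f_per: "f 0 = f L"
    and weak: "weak_dxx_per L (\<lambda>x. f x powr p) g"
    and g_sq: "(\<integral>\<^sup>+ x \<in> {0..L}. ennreal ((g x)\<^sup>2) \<partial>lborel) \<noteq> \<infinity>"
  obtains C where "\<And>y z. z \<in> {0..L} \<Longrightarrow> f z = 0 \<Longrightarrow> y \<in> {0..L} \<Longrightarrow> f y \<le> C * \<bar>y - z\<bar> powr (3 / (2 * p))"
proof -
  define v where "v = (\<lambda>x. f x powr p)"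
  have v_cont: "continuous_on {0..L} v"
    unfolding v_def by (rule continuous_on_powr'[OF f_cont continuous_on_const]) (use f_nonneg p in auto)
  have v_nonneg: "\<forall>y\<in>{0..L}. v y \<ge> 0" by (simp add: v_def)
  have v_per: "v 0 = v L" by (simp add: v_def f_per)
  obtain K m where "K \<ge> 0" "m 0 = m L"
    and taylor: "\<forall>x\<in>{0..L}. \<forall>y\<in>{0..L}. \<bar>v y - v x - m x * (y - x)\<bar> \<le> K * \<bar>y - x\<bar> * sqrt \<bar>y - x\<bar>"
    using weak_dxx_per_taylor_bound[OF L v_cont v_per weak[folded v_def] g_sq] by blast
  have "f y \<le> K powr (1 / p) * \<bar>y - z\<bar> powr (3 / (2 * p))"
    if z: "z \<in> {0..L}" "f z = 0" and y: "y \<in> {0..L}" for y z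
  proof -
    have "v z = 0" using z p by (simp add: v_def)
    with nonneg_taylor_bound_at_zero[OF L \<open>K \<ge> 0\<close> v_nonneg v_per \<open>m 0 = m L\<close> taylor z(1)] y
    have "v y \<le> K * \<bar>y - z\<bar> powr (3 / 2)" by (simp add: abs_mult_sqrt_abs mult.assoc)
    moreover have "f y = v y powr (1 / p)" using f_nonneg y p by (simp add: v_def powr_powr)
    ultimately have "f y \<le> (K * \<bar>y - z\<bar> powr (3 / 2)) powr (1 / p)"
      using v_nonneg y p by (auto intro: powr_mono2)
    also have "\<dots> = K powr (1 / p) * \<bar>y - z\<bar> powr (3 / (2 * p))"
      using \<open>K \<ge> 0\<close> by (simp add: powr_mult powr_powr)
    finally show ?thesis .
  qed
  then show ?thesis by (rule that)
qed

lemma per_ext_has_derivative_zero_at_zero: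
  fixes f g :: "real \<Rightarrow> real"
  assumes L: "L > 0" and p: "1 < p" "p < 3 / 2"
    and f_cont: "continuous_on {0..L} f" and f_nonneg: "\<forall>x\<in>{0..L}. f x \<ge> 0" and f_per: "f 0 = f L"
    and weak: "weak_dxx_per L (\<lambda>x. f x powr p) g"
    and g_sq: "(\<integral>\<^sup>+ x \<in> {0..L}. ennreal ((g x)\<^sup>2) \<partial>lborel) \<noteq> \<infinity>"
    and x0: "x0 \<in> {0..L}" and "f x0 = 0"
  shows "(per_ext L f has_real_derivative 0) (at x0)"
proof -
  obtain C where growth: "\<And>y z. z \<in> {0..L} \<Longrightarrow> f z = 0 \<Longrightarrow> y \<in> {0..L} \<Longrightarrow>
      f y \<le> C * \<bar>y - z\<bar> powr (3 / (2 * p))"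
    using weak_dxx_per_powr_growth_at_zeros[OF L p(1) f_cont f_nonneg f_per weak g_sq] by blast
  obtain \<delta> where "\<delta> > 0" and near: "\<And>x. \<bar>x - x0\<bar> < \<delta> \<Longrightarrow>
      \<exists>y\<in>{0..L}. \<exists>z\<in>{0..L}. per_ext L f x = f y \<and> f z = f x0 \<and> \<bar>y - z\<bar> = \<bar>x - x0\<bar>"
    using per_ext_near[OF L x0 f_per] by blast
  have "3 / (2 * p) > 1" using p by (simp add: field_simps)
  then show ?thesis
  proof (rule has_real_derivative_zero_if_powr_bound[OF \<open>\<delta> > 0\<close>])
    show "per_ext L f x0 = 0" using per_ext_eq[OF L f_per x0] \<open>f x0 = 0\<close> by simp
    fix x assume "\<bar>x - x0\<bar> < \<delta>"
    then obtain y z where "y \<in> {0..L}" "z \<in> {0..L}" "per_ext L f x = f y" "f z = 0" "\<bar>y - z\<bar> = \<bar>x - x0\<bar>"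
      using near \<open>f x0 = 0\<close> by metis
    then show "\<bar>per_ext L f x\<bar> \<le> C * \<bar>x - x0\<bar> powr (3 / (2 * p))"
      using growth[of z y] f_nonneg by auto
  qed
qed

section \<open>Almost every time slice of almost every sample path\<close>

lemma AE_per_ext_has_derivative_zero_at_zeros:
  fixes u w :: "real \<Rightarrow> real \<Rightarrow> real"
  assumes L: "L > 0" and p: "1 < p" "p < 3 / 2"
    and cont: "continuous_on ({0..L} \<times> {0..T}) (\<lambda>(x, t). u x t)"
    and nonneg: "\<forall>x\<in>{0..L}. \<forall>t\<in>{0..T}. u x t \<ge> 0"
    and per: "\<forall>t\<in>{0..T}. u 0 t = u L t"
    and weak: "AE t in lborel. t \<in> {0..T} \<longrightarrow> weak_dxx_per L (\<lambda>x. u x t powr p) (\<lambda>x. w x t)"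
    and square_finite: "AE t in lborel. t \<in> {0..T} \<longrightarrow>
      (\<integral>\<^sup>+ x \<in> {0..L}. ennreal ((w x t)\<^sup>2) \<partial>lborel) \<noteq> \<infinity>"
  shows "AE t in lborel. t \<in> {0<..T} \<longrightarrow>
    (\<forall>x0\<in>{0..L}. u x0 t = 0 \<longrightarrow> (per_ext L (\<lambda>x. u x t) has_real_derivative 0) (at x0))"
  using weak square_finite
proof eventually_elim
  case (elim t)
  show ?case
  proof (intro impI ballI)
    fix x0 assume "t \<in> {0<..T}" "x0 \<in> {0..L}" "u x0 t = 0"
    then have "t \<in> {0..T}" by simp
    show "(per_ext L (\<lambda>x. u x t) has_real_derivative 0) (at x0)"
    proof (rule per_ext_has_derivative_zero_at_zero[OF L p])
      show "continuous_on {0..L} (\<lambda>x. u x t)"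
        by (rule continuous_on_compose_Pair[OF cont]) (use \<open>t \<in> {0..T}\<close> in \<open>auto intro: continuous_intros\<close>)
    qed (use elim nonneg per \<open>t \<in> {0..T}\<close> \<open>x0 \<in> {0..L}\<close> \<open>u x0 t = 0\<close> in auto)
  qed
qed

lemma AE_AE_square_integral_finite:
  fixes w :: "real \<Rightarrow> real \<Rightarrow> 'w \<Rightarrow> real" and P :: "'w measure"
  assumes w_meas: "(\<lambda>(x, t, \<omega>). w x t \<omega>) \<in> borel_measurable (lborel \<Otimes>\<^sub>M lborel \<Otimes>\<^sub>M P)"
    and finite: "(\<integral>\<^sup>+ \<omega>. (\<integral>\<^sup>+ t \<in> A. (\<integral>\<^sup>+ x \<in> B. ennreal ((w x t \<omega>)\<^sup>2) \<partial>lborel) \<partial>lborel) \<partial>P) < \<infinity>"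
    and [measurable]: "A \<in> sets lborel" "B \<in> sets lborel"
  shows "AE \<omega> in P. AE t in lborel. t \<in> A \<longrightarrow> (\<integral>\<^sup>+ x \<in> B. ennreal ((w x t \<omega>)\<^sup>2) \<partial>lborel) \<noteq> \<infinity>"
proof -
  define N where "N = (\<lambda>\<omega> t. (\<integral>\<^sup>+ x \<in> B. ennreal ((w x t \<omega>)\<^sup>2) \<partial>lborel) * indicator A t)"
  have "(\<lambda>p. (snd p, snd (fst p), fst (fst p))) \<in> (P \<Otimes>\<^sub>M lborel) \<Otimes>\<^sub>M lborel \<rightarrow>\<^sub>M lborel \<Otimes>\<^sub>M lborel \<Otimes>\<^sub>M P"
    by measurable
  from measurable_compose[OF this w_meas]
  have [measurable]: "(\<lambda>p. w (snd p) (snd (fst p)) (fst (fst p))) \<in> borel_measurable ((P \<Otimes>\<^sub>M lborel) \<Otimes>\<^sub>M lborel)"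
    by simp
  have "(\<lambda>q. \<integral>\<^sup>+ x. ennreal ((w x (snd q) (fst q))\<^sup>2) * indicator B x \<partial>lborel) \<in> borel_measurable (P \<Otimes>\<^sub>M lborel)"
    by (rule lborel.borel_measurable_nn_integral) (simp add: case_prod_beta)
  then have N_meas: "case_prod N \<in> borel_measurable (P \<Otimes>\<^sub>M lborel)"
    unfolding N_def by (simp add: case_prod_beta) measurable
  have "(\<lambda>\<omega>. \<integral>\<^sup>+ t. N \<omega> t \<partial>lborel) \<in> borel_measurable P"
    by (rule lborel.borel_measurable_nn_integral) (use N_meas in simp)
  moreover have "(\<integral>\<^sup>+ \<omega>. (\<integral>\<^sup>+ t. N \<omega> t \<partial>lborel) \<partial>P) \<noteq> \<infinity>"
    using finite by (simp add: N_def)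
  ultimately have "AE \<omega> in P. (\<integral>\<^sup>+ t. N \<omega> t \<partial>lborel) \<noteq> \<infinity>"
    by (rule nn_integral_PInf_AE)
  with AE_space show ?thesis
  proof eventually_elim
    case (elim \<omega>)
    have "N \<omega> \<in> borel_measurable lborel" using measurable_Pair2[OF N_meas elim(1)] by simp
    from nn_integral_PInf_AE[OF this elim(2)] show ?case
      by eventually_elim (auto simp: N_def)
  qed
qed

theorem corollary3p2:
  fixes P :: "'w measure" and u :: "real \<Rightarrow> real \<Rightarrow> 'w \<Rightarrow> real"
    and L T \<alpha> :: real
  assumes "prob_space P"
    and "L > 0" and "T > 0"
    and "-1/3 < \<alpha>" and "\<alpha> < 0"
    and meas: "\<And>x t. (\<lambda>\<omega>. u x t \<omega>) \<in> borel_measurable P"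
    and cont: "AE \<omega> in P. continuous_on ({0..L} \<times> {0..T}) (\<lambda>(x, t). u x t \<omega>)"
    and nonneg: "AE \<omega> in P. \<forall>x\<in>{0..L}. \<forall>t\<in>{0..T}. u x t \<omega> \<ge> 0"
    and per: "AE \<omega> in P. \<forall>t\<in>{0..T}. u 0 t \<omega> = u L t \<omega>"
    and est: "\<And>a. -1/3 < a \<Longrightarrow> a < 0 \<Longrightarrow>
      \<exists>w :: real \<Rightarrow> real \<Rightarrow> 'w \<Rightarrow> real.
        (\<lambda>(x, t, \<omega>). w x t \<omega>) \<in> borel_measurable (lborel \<Otimes>\<^sub>M lborel \<Otimes>\<^sub>M P) \<and>
        (AE \<omega> in P. AE t in lborel. t \<in> {0..T} \<longrightarrow>
            weak_dxx_per L (\<lambda>x. (u x t \<omega>) powr ((a + 3) / 2)) (\<lambda>x. w x t \<omega>)) \<and>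
        (\<forall>q::nat. q \<ge> 1 \<longrightarrow> (\<exists>C::real.
            (\<integral>\<^sup>+ \<omega>. (\<integral>\<^sup>+ t \<in> {0..T}. (\<integral>\<^sup>+ x \<in> {0..L}. ennreal ((w x t \<omega>)\<^sup>2) \<partial>lborel) \<partial>lborel) ^ q \<partial>P)
              \<le> ennreal C))"
  shows "AE \<omega> in P. AE t\<^sub>0 in lborel. t\<^sub>0 \<in> {0<..T} \<longrightarrow>
           (\<forall>x\<^sub>0\<in>{0..L}. u x\<^sub>0 t\<^sub>0 \<omega> = 0 \<longrightarrow>
              ((per_ext L (\<lambda>x. u x t\<^sub>0 \<omega>)) has_real_derivative 0) (at x\<^sub>0))"
proof -
  obtain w :: "real \<Rightarrow> real \<Rightarrow> 'w \<Rightarrow> real" where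
    w_meas: "(\<lambda>(x, t, \<omega>). w x t \<omega>) \<in> borel_measurable (lborel \<Otimes>\<^sub>M lborel \<Otimes>\<^sub>M P)"
    and weak: "AE \<omega> in P. AE t in lborel. t \<in> {0..T} \<longrightarrow>
      weak_dxx_per L (\<lambda>x. (u x t \<omega>) powr ((\<alpha> + 3) / 2)) (\<lambda>x. w x t \<omega>)"
    and moments: "\<forall>q::nat. q \<ge> 1 \<longrightarrow> (\<exists>C::real.
      (\<integral>\<^sup>+ \<omega>. (\<integral>\<^sup>+ t \<in> {0..T}. (\<integral>\<^sup>+ x \<in> {0..L}. ennreal ((w x t \<omega>)\<^sup>2) \<partial>lborel) \<partial>lborel) ^ q \<partial>P)
        \<le> ennreal C)"
    using est[OF \<open>-1/3 < \<alpha>\<close> \<open>\<alpha> < 0\<close>] by blast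
  obtain C :: real where
    "(\<integral>\<^sup>+ \<omega>. (\<integral>\<^sup>+ t \<in> {0..T}. (\<integral>\<^sup>+ x \<in> {0..L}. ennreal ((w x t \<omega>)\<^sup>2) \<partial>lborel) \<partial>lborel) \<partial>P) \<le> ennreal C"
    using moments[rule_format, of 1] by auto
  then have square_finite: "AE \<omega> in P. AE t in lborel. t \<in> {0..T} \<longrightarrow>
      (\<integral>\<^sup>+ x \<in> {0..L}. ennreal ((w x t \<omega>)\<^sup>2) \<partial>lborel) \<noteq> \<infinity>"
    by (intro AE_AE_square_integral_finite[OF w_meas]) (simp_all add: order.strict_trans1)
  have p: "1 < (\<alpha> + 3) / 2" "(\<alpha> + 3) / 2 < 3 / 2"
    using \<open>-1/3 < \<alpha>\<close> \<open>\<alpha> < 0\<close> by simp_all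
  from cont nonneg per weak square_finite show ?thesis
    by eventually_elim (rule AE_per_ext_has_derivative_zero_at_zeros[OF \<open>L > 0\<close> p])
qed

end
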